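(* Let $A,B\in\mathrm{SL}_2\mathbb{Z}_{\ge0}$ be noncommuting, well oriented, with $\mathrm{tr}(A)<\mathrm{tr}(B)$ and $\mathrm{tr}(AB)=\mathrm{tr}(B^2)$. Fix a (possibly empty) word $w$ and an integer $s\ge0$. Then: (1) $[wab(ab^2)^sab^4]<[wab^2(ab^2)^sab^3]$; (2) $[wab^4(ab^2)^sab]<[wab^3(ab^2)^sab^2]$, provided $w$ is empty or begins with $a$.
   Context: Words are finite strings over $\{a,b\}$; $\phi$ is the monoid homomorphism with $\phi(a)=A,\phi(b)=B$, and $[w]=\mathrm{tr}(\phi(w))$. Fixed points are for the Möbius action on $\partial\mathcal{H}=\mathbb{P}^1\mathbb{R}$; $\alpha^\pm$ ($\beta^\pm$) are the attracting/repelling fixed points of $A$ ($B$), both equal to the unique fixed point if parabolic. With $\partial\mathcal{H}$ cyclically ordered and $[\alpha,\beta]$ the closed counterclockwise interval from $\alpha$ to $\beta$, let $I^+=\{\alpha^+\}$ if $\alpha^+=\beta^+$, and otherwise the one of $[\alpha^+,\beta^+],[\beta^+,\alpha^+]$ mapped into itself by both $A$ and $B$ (if it exists); define $I^-$ likewise with $A^{-1},B^{-1},\alpha^-,\beta^-$. The pair is coherently oriented if both exist, and well oriented if $A,B$ is coherently oriented but $A,B^{-1}$ is not. *)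

theory Defs
  imports "HOL-Analysis.Analysis"
begin

text \<open>2x2 integer matrices are \<open>int^2^2\<close>; entry \<open>M$i$j\<close> is row i, column j.\<close>

definition SL2_nonneg :: "int^2^2 \<Rightarrow> bool" where
  "SL2_nonneg M \<longleftrightarrow> det M = 1 \<and> (\<forall>i j. M$i$j \<ge> 0)"

text \<open>Inverse of a determinant-one 2x2 matrix.\<close>
definition inv2 :: "int^2^2 \<Rightarrow> int^2^2" where
  "inv2 M = (\<chi> i j. if i = 1 \<and> j = 1 then M$2$2 else if i = 2 \<and> j = 2 then M$1$1
                     else - M$i$j)"

text \<open>Boundary of the upper half plane: \<open>\<real> \<union> {\<infinity>}\<close>.\<close>
datatype bdry = Fin real | Inf

fun mob :: "int^2^2 \<Rightarrow> bdry \<Rightarrow> bdry" where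
  "mob M (Fin x) = (let den = of_int (M$2$1) * x + of_int (M$2$2) in
     if den = 0 then Inf else Fin ((of_int (M$1$1) * x + of_int (M$1$2)) / den))"
| "mob M Inf = (if M$2$1 = 0 then Inf else Fin (of_int (M$1$1) / of_int (M$2$1)))"

text \<open>Linear action on \<open>\<real>\<^sup>2\<close> and the boundary point (line) spanned by a nonzero vector:
  \<open>(x,y) \<mapsto> x/y\<close>.\<close>
definition linact :: "int^2^2 \<Rightarrow> real \<times> real \<Rightarrow> real \<times> real" where
  "linact M v = (of_int (M$1$1) * fst v + of_int (M$1$2) * snd v,
                 of_int (M$2$1) * fst v + of_int (M$2$2) * snd v)"

definition pt :: "real \<times> real \<Rightarrow> bdry" where
  "pt v = (if snd v = 0 then Inf else Fin (fst v / snd v))"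

definition is_eigen :: "int^2^2 \<Rightarrow> real \<Rightarrow> real \<times> real \<Rightarrow> bool" where
  "is_eigen M l v \<longleftrightarrow> v \<noteq> (0,0) \<and> linact M v = (l * fst v, l * snd v)"

text \<open>Attracting fixed point: eigenline of the eigenvalue of largest modulus;
  repelling: of smallest modulus. For parabolic matrices both are the unique fixed point.\<close>
definition attr :: "int^2^2 \<Rightarrow> bdry" where
  "attr M = (THE z. \<exists>l v. is_eigen M l v \<and> z = pt v \<and>
                      (\<forall>m w. is_eigen M m w \<longrightarrow> \<bar>m\<bar> \<le> \<bar>l\<bar>))"

definition repl :: "int^2^2 \<Rightarrow> bdry" where
  "repl M = (THE z. \<exists>l v. is_eigen M l v \<and> z = pt v \<and>
                      (\<forall>m w. is_eigen M m w \<longrightarrow> \<bar>l\<bar> \<le> \<bar>m\<bar>))"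

text \<open>Closed counterclockwise interval from the first to the second point
  (counterclockwise = increasing real part, passing through \<open>\<infinity>\<close> after \<open>+\<infinity>\<close>).\<close>
fun ccw :: "bdry \<Rightarrow> bdry \<Rightarrow> bdry set" where
  "ccw (Fin x) (Fin y) = (if x \<le> y then {Fin z | z. x \<le> z \<and> z \<le> y}
      else {Fin z | z. x \<le> z} \<union> {Inf} \<union> {Fin z | z. z \<le> y})"
| "ccw (Fin x) Inf = {Fin z | z. x \<le> z} \<union> {Inf}"
| "ccw Inf (Fin y) = {Inf} \<union> {Fin z | z. z \<le> y}"
| "ccw Inf Inf = {Inf}"

definition inv_interval_exists :: "int^2^2 \<Rightarrow> int^2^2 \<Rightarrow> bdry \<Rightarrow> bdry \<Rightarrow> bool" where
  "inv_interval_exists M N x y \<longleftrightarrow> x = y \<or>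
     (\<exists>I \<in> {ccw x y, ccw y x}. mob M ` I \<subseteq> I \<and> mob N ` I \<subseteq> I)"

definition coherently_oriented :: "int^2^2 \<Rightarrow> int^2^2 \<Rightarrow> bool" where
  "coherently_oriented A B \<longleftrightarrow>
     inv_interval_exists A B (attr A) (attr B) \<and>
     inv_interval_exists (inv2 A) (inv2 B) (repl A) (repl B)"

definition well_oriented :: "int^2^2 \<Rightarrow> int^2^2 \<Rightarrow> bool" where
  "well_oriented A B \<longleftrightarrow> coherently_oriented A B \<and> \<not> coherently_oriented A (inv2 B)"

datatype letter = ltr_a | ltr_b

definition phi :: "int^2^2 \<Rightarrow> int^2^2 \<Rightarrow> letter list \<Rightarrow> int^2^2" where
  "phi A B w = foldr (\<lambda>l M. (case l of ltr_a \<Rightarrow> A | ltr_b \<Rightarrow> B) ** M) w (mat 1)"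

definition trw :: "int^2^2 \<Rightarrow> int^2^2 \<Rightarrow> letter list \<Rightarrow> int" where
  "trw A B w = trace (phi A B w)"

end

theory Submission
  imports Defs
begin

(* Put Q = ab^2 and R = Q^(s+1).  Cayley-Hamilton in SL_2 gives R = p Q - q I with p >= 1, and
   each word of the theorem has the form W U R V (using B^-1 = tr B - B in part (2)).  The two
   words compared have equal products U V, so the q-terms cancel and the traces differ by
   p tr(W X).  Since B K B = K for the traceless commutator K = AB - BA, X equals A(BA - AB)B^2,
   resp. AB^2(AB - BA), and Fricke's identity
     A(BA - AB)B = (tr AB - tr A tr B) AB + tr A A + tr B B - 2I
   shows that A(BA - AB)B and B(AB - BA)A have nonnegative entries and positive diagonal, because
   tr AB = tr B^2 = (tr B)^2 - 2 > tr A tr B.  A trace of a product of such integer matrices is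
   at least 2. *)

lemma matrix_diff_ldistrib:
  fixes A :: "'a::comm_ring_1^'n^'m"
  shows "A ** (B - C) = A ** B - A ** C"
  by (vector matrix_matrix_mult_def sum_subtractf right_diff_distrib)

lemma matrix_diff_rdistrib:
  fixes A :: "'a::comm_ring_1^'n^'m"
  shows "(A - B) ** C = A ** C - B ** C"
  by (vector matrix_matrix_mult_def sum_subtractf left_diff_distrib)

definition mat_smult :: "'a::times \<Rightarrow> 'a^'n^'m \<Rightarrow> 'a^'n^'m" where
  "mat_smult k A = (\<chi> i j. k * A$i$j)"

lemma mat_smult_nth [simp]: "mat_smult k A $ i $ j = k * A$i$j"
  by (simp add: mat_smult_def)

lemma mat_smult_matrix_mult_left:
  fixes A :: "'a::comm_semiring_1^'n^'m"
  shows "mat_smult k A ** B = mat_smult k (A ** B)"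
  by (simp add: matrix_matrix_mult_def vec_eq_iff sum_distrib_left mult_ac)

lemma mat_smult_matrix_mult_right:
  fixes A :: "'a::comm_semiring_1^'n^'m"
  shows "A ** mat_smult k B = mat_smult k (A ** B)"
  by (simp add: matrix_matrix_mult_def vec_eq_iff sum_distrib_left mult_ac)

lemma matrix_mult_mat_right:
  fixes A :: "'a::comm_semiring_1^'n^'m"
  shows "A ** mat k = mat_smult k A"
  by (simp add: matrix_matrix_mult_def mat_def vec_eq_iff if_distrib if_distribR mult_ac
      cong: if_cong)

lemma trace_mat_smult: "trace (mat_smult k (A :: 'a::comm_semiring_1^'n^'n)) = k * trace A"
  by (simp add: trace_def sum_distrib_left)

lemma matrix_mult_2_nth:
  "((X :: 'a::semiring_1^2^2) ** Y) $ i $ j = X$i$1 * Y$1$j + X$i$2 * Y$2$j"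
  by (simp add: matrix_matrix_mult_def sum_2)

lemma mat_2_eq_iff:
  "(X :: 'a^2^2) = Y \<longleftrightarrow> X$1$1 = Y$1$1 \<and> X$1$2 = Y$1$2 \<and> X$2$1 = Y$2$1 \<and> X$2$2 = Y$2$2"
  by (auto simp: vec_eq_iff forall_2)

lemma trace_2: "trace (X :: 'a::semiring_1^2^2) = X$1$1 + X$2$2"
  by (simp add: trace_def sum_2)

lemma mat_nth: "mat k $ i $ j = (if i = j then k else 0)"
  by (simp add: mat_def)

lemmas mat_2_simps = mat_2_eq_iff matrix_mult_2_nth trace_2 det_2 mat_nth

lemma cayley_hamilton_2:
  fixes M :: "'a::comm_ring_1^2^2"
  shows "M ** M = mat_smult (trace M) M - mat (det M)"
  unfolding mat_2_eq_iff by (simp add: mat_2_simps algebra_simps)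

lemma sl2_right_inverse:
  fixes B :: "'a::comm_ring_1^2^2"
  assumes "det B = 1"
  shows "B ** (mat (trace B) - B) = mat 1"
  by (simp add: matrix_diff_ldistrib matrix_mult_mat_right cayley_hamilton_2 assms)

lemma sl2_trace_square:
  fixes B :: "'a::comm_ring_1^2^2"
  assumes "det B = 1"
  shows "trace (B ** B) = trace B ^ 2 - 2"
  using assms
  by (simp add: cayley_hamilton_2 trace_sub trace_mat_smult trace_2 mat_nth power2_eq_square
      algebra_simps)

lemma sl2_conj_traceless:
  fixes B K :: "'a::idom^2^2"
  assumes "det B = 1" "trace K = 0" "trace (B ** K) = 0"
  shows "B ** K ** B = K"
  using assms unfolding mat_2_eq_iff by (simp add: mat_2_simps; algebra)

lemma sl2_conj_commutator:
  fixes A B :: "'a::idom^2^2"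
  assumes "det B = 1"
  shows "B ** (A ** B - B ** A) ** B = A ** B - B ** A"
    and "B ** (B ** A - A ** B) ** B = B ** A - A ** B"
proof -
  have tr: "trace (B ** (A ** B)) = trace (B ** (B ** A))"
    by (metis matrix_mul_assoc trace_mul_sym)
  then show "B ** (A ** B - B ** A) ** B = A ** B - B ** A"
    by (intro sl2_conj_traceless assms)
      (simp_all add: trace_sub matrix_diff_ldistrib trace_mul_sym[of A])
  from tr show "B ** (B ** A - A ** B) ** B = B ** A - A ** B"
    by (intro sl2_conj_traceless assms)
      (simp_all add: trace_sub matrix_diff_ldistrib trace_mul_sym[of A])
qed

lemma sl2_commutator_sandwich:
  fixes A B :: "'a::idom^2^2"
  assumes "det A = 1" "det B = 1"
  shows "A ** (B ** A - A ** B) ** B = mat_smult (trace (A ** B) - trace A * trace B) (A ** B)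
     + mat_smult (trace A) A + mat_smult (trace B) B - mat 2"
  using assms unfolding mat_2_eq_iff by (simp add: mat_2_simps; algebra)

fun mat_pow :: "'a::semiring_1^'n^'n \<Rightarrow> nat \<Rightarrow> 'a^'n^'n" where
  "mat_pow Q 0 = mat 1"
| "mat_pow Q (Suc n) = Q ** mat_pow Q n"

lemma sl2_pow_chebyshev:
  fixes Q :: "'a::linordered_idom^2^2"
  assumes "det Q = 1" "2 \<le> trace Q"
  shows "\<exists>p q. mat_pow Q n ** Q = mat_smult p Q - mat q \<and> 1 \<le> p \<and> q \<le> p"
proof (induction n)
  case 0
  have "mat_pow Q 0 ** Q = mat_smult 1 Q - mat 0"
    by (simp add: vec_eq_iff)
  then show ?case by fastforce
next
  case (Suc n)
  then obtain p q where pq: "mat_pow Q n ** Q = mat_smult p Q - mat q" "1 \<le> p" "q \<le> p"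
    by blast
  have "mat_pow Q (Suc n) ** Q = Q ** (mat_smult p Q - mat q)"
    by (simp add: pq(1) flip: matrix_mul_assoc)
  also have "\<dots> = mat_smult (trace Q * p - q) Q - mat p"
    unfolding mat_2_eq_iff using assms(1) by (simp add: mat_2_simps algebra_simps)
  finally have "mat_pow Q (Suc n) ** Q = mat_smult (trace Q * p - q) Q - mat p" .
  moreover have "2 * p \<le> trace Q * p"
    using assms(2) pq(2) by (simp add: mult_right_mono)
  then have "1 \<le> trace Q * p - q" "p \<le> trace Q * p - q"
    using pq(2,3) by linarith+
  ultimately show ?case by blast
qed

lemma trace_diff_sandwich:
  fixes W U V U' V' Q :: "'a::comm_ring_1^'n^'n"
  assumes "U ** V = U' ** V'"
  shows "trace (W ** U ** (mat_smult p Q - mat q) ** V)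
       - trace (W ** U' ** (mat_smult p Q - mat q) ** V')
       = p * trace (W ** (U ** Q ** V - U' ** Q ** V'))"
proof -
  have expand: "trace (W ** X ** (mat_smult p Q - mat q) ** Y)
      = p * trace (W ** (X ** Q ** Y)) - q * trace (W ** (X ** Y))" for X Y :: "'a^'n^'n"
    by (simp add: matrix_diff_ldistrib matrix_diff_rdistrib mat_smult_matrix_mult_left
        mat_smult_matrix_mult_right matrix_mult_mat_right trace_sub trace_mat_smult
        matrix_mul_assoc)
  show ?thesis
    unfolding expand using assms by (simp add: matrix_diff_ldistrib trace_sub right_diff_distrib)
qed

definition nonneg_posdiag :: "int^2^2 \<Rightarrow> bool" where
  "nonneg_posdiag M \<longleftrightarrow> (\<forall>i j. 0 \<le> M$i$j) \<and> (\<forall>i. 0 < M$i$i)"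

lemma nonneg_posdiag_2:
  "nonneg_posdiag M \<longleftrightarrow> 0 < M$1$1 \<and> 0 < M$2$2 \<and> 0 \<le> M$1$2 \<and> 0 \<le> M$2$1"
  by (auto simp: nonneg_posdiag_def forall_2 less_imp_le)

lemma nonneg_posdiag_mat_1: "nonneg_posdiag (mat 1)"
  by (simp add: nonneg_posdiag_def mat_nth)

lemma nonneg_posdiag_mult:
  assumes "nonneg_posdiag X" "nonneg_posdiag Y"
  shows "nonneg_posdiag (X ** Y)"
  using assms unfolding nonneg_posdiag_2 matrix_mult_2_nth
  by (simp add: add_pos_nonneg add_nonneg_pos add_nonneg_nonneg)

lemma nonneg_posdiag_trace_ge_2: "nonneg_posdiag M \<Longrightarrow> 2 \<le> trace M"
  by (simp add: nonneg_posdiag_2 trace_2)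

lemma SL2_nonneg_imp_nonneg_posdiag:
  assumes "SL2_nonneg M"
  shows "nonneg_posdiag M"
proof -
  have det: "M$1$1 * M$2$2 = 1 + M$1$2 * M$2$1" and nonneg: "\<And>i j. 0 \<le> M$i$j"
    using assms by (auto simp: SL2_nonneg_def det_2)
  have "0 < M$1$1 * M$2$2"
    unfolding det using nonneg by (simp add: add_pos_nonneg)
  then have "M$1$1 \<noteq> 0" "M$2$2 \<noteq> 0"
    by auto
  with nonneg show ?thesis
    by (simp add: nonneg_posdiag_2 order_less_le)
qed

lemma nonneg_posdiag_combination:
  assumes "nonneg_posdiag X" "nonneg_posdiag A" "nonneg_posdiag B" "0 \<le> c" "2 \<le> x" "2 \<le> y"
  shows "nonneg_posdiag (mat_smult c X + mat_smult x A + mat_smult y B - mat 2)"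
  unfolding nonneg_posdiag_def
proof (intro conjI allI)
  fix i j :: 2
  have nonneg: "0 \<le> c * X$i$j" "0 \<le> x * A$i$j" "0 \<le> y * B$i$j"
    using assms by (simp_all add: nonneg_posdiag_def)
  have "1 \<le> A$i$i" "1 \<le> B$i$i"
    using assms(2,3) by (simp_all add: nonneg_posdiag_def int_one_le_iff_zero_less)
  then have diag: "2 \<le> x * A$i$i" "2 \<le> y * B$i$i"
    using assms(5,6) mult_mono[of 2 x 1 "A$i$i"] mult_mono[of 2 y 1 "B$i$i"] by simp_all
  have "0 \<le> c * X$i$i" using assms by (simp add: nonneg_posdiag_def)
  with diag show "0 < (mat_smult c X + mat_smult x A + mat_smult y B - mat 2)$i$i"
    by (simp add: mat_nth)
  from nonneg diag show "0 \<le> (mat_smult c X + mat_smult x A + mat_smult y B - mat 2)$i$j"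
    by (cases "i = j") (simp_all add: mat_nth)
qed

lemma nonneg_posdiag_commutator_sandwich:
  assumes "det A = 1" "det B = 1" "nonneg_posdiag A" "nonneg_posdiag B"
    and "trace A * trace B \<le> trace (A ** B)"
  shows "nonneg_posdiag (A ** (B ** A - A ** B) ** B)"
  unfolding sl2_commutator_sandwich[OF assms(1,2)]
  using assms(3-5) by (intro nonneg_posdiag_combination nonneg_posdiag_mult)
    (simp_all add: nonneg_posdiag_trace_ge_2)

lemma phi_Nil [simp]: "phi A B [] = mat 1"
  by (simp add: phi_def)

lemma phi_Cons [simp]: "phi A B (l # u) = (case l of ltr_a \<Rightarrow> A | ltr_b \<Rightarrow> B) ** phi A B u"
  by (simp add: phi_def)

lemma phi_append: "phi A B (u @ v) = phi A B u ** phi A B v"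
  by (induction u) (auto simp: matrix_mul_assoc)

lemma phi_concat_replicate: "phi A B (concat (replicate n u)) = mat_pow (phi A B u) n"
  by (induction n) (simp_all add: phi_append)

lemma nonneg_posdiag_phi:
  "nonneg_posdiag A \<Longrightarrow> nonneg_posdiag B \<Longrightarrow> nonneg_posdiag (phi A B w)"
  by (induction w) (auto simp: nonneg_posdiag_mat_1 nonneg_posdiag_mult split: letter.split)

lemma trace_phi_commutator_ge_2:
  assumes "SL2_nonneg A" "SL2_nonneg B" "trace A * trace B \<le> trace (A ** B)"
    and "w = [] \<or> hd w = ltr_a"
  shows "2 \<le> trace (phi A B w ** (A ** B ** B ** (A ** B - B ** A)))"
proof -
  have dets: "det A = 1" "det B = 1" and pos: "nonneg_posdiag A" "nonneg_posdiag B"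
    using assms(1,2) by (auto simp: SL2_nonneg_def SL2_nonneg_imp_nonneg_posdiag)
  define K where "K = A ** B - B ** A"
  define L where "L = B ** K ** A"
  have L: "nonneg_posdiag L"
    unfolding L_def K_def using assms(3)
    by (intro nonneg_posdiag_commutator_sandwich dets pos)
      (simp add: trace_mul_sym[of B] mult.commute)
  show ?thesis
  proof (cases w)
    case Nil
    then have "trace (phi A B w ** (A ** B ** B ** K)) = trace ((A ** B) ** (B ** K))"
      by (simp add: matrix_mul_assoc)
    also have "\<dots> = trace (B ** K ** (A ** B))"
      by (rule trace_mul_sym)
    also have "\<dots> = trace (L ** B)"
      by (simp add: L_def matrix_mul_assoc)
    finally show ?thesis
      using L pos by (simp add: K_def nonneg_posdiag_trace_ge_2 nonneg_posdiag_mult)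
  next
    case (Cons l u)
    with assms(4) have "w = ltr_a # u" by simp
    then have "trace (phi A B w ** (A ** B ** B ** K))
        = trace (A ** (phi A B u ** A ** B ** B ** K))"
      by (simp add: matrix_mul_assoc)
    also have "\<dots> = trace (phi A B u ** A ** B ** B ** K ** A)"
      by (rule trace_mul_sym)
    also have "\<dots> = trace (phi A B u ** A ** B ** L)"
      by (simp add: L_def matrix_mul_assoc)
    finally show ?thesis
      using L pos
      by (simp add: K_def nonneg_posdiag_trace_ge_2 nonneg_posdiag_mult nonneg_posdiag_phi)
  qed
qed

lemma trw_lt_move_b_left:
  assumes "SL2_nonneg A" "SL2_nonneg B" "trace A * trace B \<le> trace (A ** B)"
  shows "trw A B (w @ [ltr_a, ltr_b] @ concat (replicate s [ltr_a, ltr_b, ltr_b])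
                 @ [ltr_a, ltr_b, ltr_b, ltr_b, ltr_b])
       < trw A B (w @ [ltr_a, ltr_b, ltr_b] @ concat (replicate s [ltr_a, ltr_b, ltr_b])
                 @ [ltr_a, ltr_b, ltr_b, ltr_b])"
    (is "trw A B ?u < trw A B ?v")
proof -
  have dets: "det A = 1" "det B = 1" and pos: "nonneg_posdiag A" "nonneg_posdiag B"
    using assms(1,2) by (auto simp: SL2_nonneg_def SL2_nonneg_imp_nonneg_posdiag)
  define W Q where "W = phi A B w" and "Q = A ** B ** B"
  have "det Q = 1" "2 \<le> trace Q"
    using dets pos by (simp_all add: Q_def det_mul nonneg_posdiag_trace_ge_2 nonneg_posdiag_mult)
  then obtain p q where R: "mat_pow Q s ** Q = mat_smult p Q - mat q" and "1 \<le> p"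
    using sl2_pow_chebyshev by blast
  have "trw A B ?v - trw A B ?u
      = trace (W ** (A ** B ** B) ** (mat_smult p Q - mat q) ** B)
      - trace (W ** (A ** B) ** (mat_smult p Q - mat q) ** (B ** B))"
    unfolding R[symmetric]
    by (simp add: trw_def phi_append phi_concat_replicate W_def Q_def matrix_mul_assoc)
  also have "\<dots> = p * trace (W ** (A ** B ** B ** Q ** B - A ** B ** Q ** (B ** B)))"
    by (rule trace_diff_sandwich) (simp add: matrix_mul_assoc)
  also have "A ** B ** B ** Q ** B - A ** B ** Q ** (B ** B) = A ** (B ** A - A ** B) ** B ** B"
    by (subst sl2_conj_commutator(2)[OF dets(2), symmetric])
      (simp add: Q_def matrix_diff_ldistrib matrix_diff_rdistrib matrix_mul_assoc)
  finally have "trw A B ?v - trw A B ?u = p * trace (W ** (A ** (B ** A - A ** B) ** B ** B))" .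
  moreover have "2 \<le> trace (W ** (A ** (B ** A - A ** B) ** B ** B))"
    using dets pos assms(3) unfolding W_def
    by (simp add: nonneg_posdiag_trace_ge_2 nonneg_posdiag_mult nonneg_posdiag_phi
        nonneg_posdiag_commutator_sandwich)
  ultimately have "0 < trw A B ?v - trw A B ?u"
    using \<open>1 \<le> p\<close> by (simp add: zero_less_mult_iff)
  then show ?thesis by simp
qed

lemma trw_lt_move_b_right:
  assumes "SL2_nonneg A" "SL2_nonneg B" "trace A * trace B \<le> trace (A ** B)"
    and "w = [] \<or> hd w = ltr_a"
  shows "trw A B (w @ [ltr_a, ltr_b, ltr_b, ltr_b, ltr_b]
                 @ concat (replicate s [ltr_a, ltr_b, ltr_b]) @ [ltr_a, ltr_b])
       < trw A B (w @ [ltr_a, ltr_b, ltr_b, ltr_b] @ concat (replicate s [ltr_a, ltr_b, ltr_b])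
                 @ [ltr_a, ltr_b, ltr_b])"
    (is "trw A B ?u < trw A B ?v")
proof -
  have dets: "det A = 1" "det B = 1" and pos: "nonneg_posdiag A" "nonneg_posdiag B"
    using assms(1,2) by (auto simp: SL2_nonneg_def SL2_nonneg_imp_nonneg_posdiag)
  define W Q where "W = phi A B w" and "Q = A ** B ** B"
  have "det Q = 1" "2 \<le> trace Q"
    using dets pos by (simp_all add: Q_def det_mul nonneg_posdiag_trace_ge_2 nonneg_posdiag_mult)
  then obtain p q where R: "mat_pow Q s ** Q = mat_smult p Q - mat q" and "1 \<le> p"
    using sl2_pow_chebyshev by blast
  define B' where "B' = mat (trace B) - B"
  have B': "X ** B ** B' = X" for X :: "int^2^2"
    using sl2_right_inverse[OF dets(2)] by (simp add: B'_def flip: matrix_mul_assoc)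
  have "trw A B ?v - trw A B ?u
      = trace (W ** (A ** B ** B ** B) ** (mat_smult p Q - mat q) ** mat 1)
      - trace (W ** (A ** B ** B ** B ** B) ** (mat_smult p Q - mat q) ** B')"
    unfolding R[symmetric]
    by (simp add: trw_def phi_append phi_concat_replicate W_def Q_def matrix_mul_assoc B')
  also have "\<dots>
      = p * trace (W ** (A ** B ** B ** B ** Q ** mat 1 - A ** B ** B ** B ** B ** Q ** B'))"
    by (rule trace_diff_sandwich) (simp add: matrix_mul_assoc B')
  also have "A ** B ** B ** B ** Q ** mat 1 - A ** B ** B ** B ** B ** Q ** B'
      = A ** B ** B ** (A ** B - B ** A)"
    by (subst sl2_conj_commutator(1)[OF dets(2), symmetric])
      (simp add: Q_def matrix_diff_ldistrib matrix_diff_rdistrib matrix_mul_assoc B')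
  finally have "trw A B ?v - trw A B ?u = p * trace (W ** (A ** B ** B ** (A ** B - B ** A)))" .
  moreover have "2 \<le> trace (W ** (A ** B ** B ** (A ** B - B ** A)))"
    unfolding W_def using assms by (rule trace_phi_commutator_ge_2)
  ultimately have "0 < trw A B ?v - trw A B ?u"
    using \<open>1 \<le> p\<close> by (simp add: zero_less_mult_iff)
  then show ?thesis by simp
qed

theorem lemma6p2:
  fixes A B :: "int^2^2" and w :: "letter list" and s :: nat
  assumes "SL2_nonneg A" and "SL2_nonneg B"
    and "A ** B \<noteq> B ** A"
    and "well_oriented A B"
    and "trace A < trace B"
    and "trace (A ** B) = trace (B ** B)"
  shows "(trw A B (w @ [ltr_a, ltr_b] @ concat (replicate s [ltr_a, ltr_b, ltr_b])
                   @ [ltr_a, ltr_b, ltr_b, ltr_b, ltr_b])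
         < trw A B (w @ [ltr_a, ltr_b, ltr_b] @ concat (replicate s [ltr_a, ltr_b, ltr_b])
                   @ [ltr_a, ltr_b, ltr_b, ltr_b]))
       \<and> ((w = [] \<or> hd w = ltr_a) \<longrightarrow>
         trw A B (w @ [ltr_a, ltr_b, ltr_b, ltr_b, ltr_b] @ concat (replicate s [ltr_a, ltr_b, ltr_b])
                   @ [ltr_a, ltr_b])
         < trw A B (w @ [ltr_a, ltr_b, ltr_b, ltr_b] @ concat (replicate s [ltr_a, ltr_b, ltr_b])
                   @ [ltr_a, ltr_b, ltr_b]))"
proof -
  have "2 \<le> trace A"
    using SL2_nonneg_imp_nonneg_posdiag[OF assms(1)] by (rule nonneg_posdiag_trace_ge_2)
  have "trace B \<le> (trace B - trace A) * trace B"
    using mult_right_mono[of 1 "trace B - trace A" "trace B"] assms(5) \<open>2 \<le> trace A\<close>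
    by simp
  moreover have "trace (A ** B) = trace B ^ 2 - 2"
    using assms(2,6) by (simp add: SL2_nonneg_def sl2_trace_square)
  ultimately have "trace A * trace B \<le> trace (A ** B)"
    using assms(5) \<open>2 \<le> trace A\<close> by (simp add: power2_eq_square algebra_simps)
  then show ?thesis
    using trw_lt_move_b_left[OF assms(1,2)] trw_lt_move_b_right[OF assms(1,2)] by blast
qed

end
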